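(* Let $m\ge 2$, let $K$ be a Latin square on $[m]$ and let $J$ be a subsquare of $K$. Then there exists a simple degeneration $M[K;J]$ of $M[K]$ whose restriction to $X(J)$ is the uniform matroid of rank $2$. Moreover, $$\dim H^1(A(M[K;J]),e_\lambda)=1$$ for a non-zero one-form $e_\lambda=\lambda_1(e_1+\cdots+e_m)+\lambda_2(e_{m+1}+\cdots+e_{2m})+\lambda_3(e_{2m+1}+\cdots+e_{3m})$ with $\lambda_1+\lambda_2+\lambda_3=0$.
   Context: $R$ is the coefficient ring (a field, so dimension makes sense); $E$ is the exterior algebra over $R$ on degree-one generators $e_1,\ldots,e_{3m}$, with $\partial 1=0$, $\partial(e_{i_1}\wedge\cdots\wedge e_{i_p})=\sum_{k=1}^p(-1)^{k-1}e_{i_1}\wedge\cdots\wedge\widehat{e_{i_k}}\wedge\cdots\wedge e_{i_p}$. The Orlik–Solomon algebra $A(M)$ of a loopless matroid $M$ on $[3m]$ is $E$ modulo the ideal generated by $\partial(e_{i_1}\wedge\cdots\wedge e_{i_s})$ over all circuits $\{i_1,\ldots,i_s\}$; $H^p(A(M),e_\lambda)$ is the cohomology of $(A(M),e_\lambda\wedge\cdot)$. A Latin square $K=(k_{i,j})$ on $[m]$ is an $m\times m$ matrix with entries in $[m]$, each symbol once in each row and column. $M[K]$ is the unique simple rank-$3$ matroid on $[3m]$ whose family of $3$-element circuits is $\mathcal{C}[K]=\{\{i,m+j,2m+k_{i,j}\}:1\le i,j\le m\}$. A subsquare of $K$ is an $s\times s$ submatrix formed by $s$ rows and $s$ columns that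 is itself a Latin square of order $s$ (on $s$ symbols). For a subsquare $J$ with row set $R_J$, column set $C_J$ and symbol set $S_J$, put $X(J)=R_J\cup\{m+j:j\in C_J\}\cup\{2m+k:k\in S_J\}$. A loopless rank-$3$ matroid $M'$ on $[3m]$ is a degeneration of $M$ if its family of $3$-element circuits contains that of $M$. *)

theory Defs
  imports Complex_Main "HOL-Library.Function_Algebras"
begin

definition latin_square :: "nat \<Rightarrow> (nat \<Rightarrow> nat \<Rightarrow> nat) \<Rightarrow> bool" where
  "latin_square m K \<longleftrightarrow>
     (\<forall>i\<in>{1..m}. bij_betw (\<lambda>j. K i j) {1..m} {1..m}) \<and>
     (\<forall>j\<in>{1..m}. bij_betw (\<lambda>i. K i j) {1..m} {1..m})"

definition subsquare :: "nat \<Rightarrow> (nat \<Rightarrow> nat \<Rightarrow> nat) \<Rightarrow> nat set \<Rightarrow> nat set \<Rightarrow> nat set \<Rightarrow> bool" where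
  "subsquare m K Rs Cs Ss \<longleftrightarrow>
     Rs \<subseteq> {1..m} \<and> Cs \<subseteq> {1..m} \<and> Ss \<subseteq> {1..m} \<and> Rs \<noteq> {} \<and>
     card Rs = card Cs \<and> card Cs = card Ss \<and>
     (\<forall>i\<in>Rs. bij_betw (\<lambda>j. K i j) Cs Ss) \<and>
     (\<forall>j\<in>Cs. bij_betw (\<lambda>i. K i j) Rs Ss)"

definition XJ :: "nat \<Rightarrow> nat set \<Rightarrow> nat set \<Rightarrow> nat set \<Rightarrow> nat set" where
  "XJ m Rs Cs Ss = Rs \<union> (\<lambda>j. m + j) ` Cs \<union> (\<lambda>k. 2*m + k) ` Ss"

definition CK :: "nat \<Rightarrow> (nat \<Rightarrow> nat \<Rightarrow> nat) \<Rightarrow> nat set set" where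
  "CK m K = {{i, m + j, 2*m + K i j} | i j. i \<in> {1..m} \<and> j \<in> {1..m}}"

definition matroid :: "nat set \<Rightarrow> (nat set \<Rightarrow> bool) \<Rightarrow> bool" where
  "matroid E indep \<longleftrightarrow> finite E \<and> indep {} \<and>
     (\<forall>I. indep I \<longrightarrow> I \<subseteq> E) \<and>
     (\<forall>I J. indep J \<and> I \<subseteq> J \<longrightarrow> indep I) \<and>
     (\<forall>I J. indep I \<and> indep J \<and> card I < card J \<longrightarrow> (\<exists>x\<in>J - I. indep (insert x I)))"

definition circuits :: "nat set \<Rightarrow> (nat set \<Rightarrow> bool) \<Rightarrow> nat set set" where
  "circuits E indep = {C. C \<subseteq> E \<and> \<not> indep C \<and> (\<forall>D. D \<subset> C \<longrightarrow> indep D)}"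

definition mrank :: "(nat set \<Rightarrow> bool) \<Rightarrow> nat set \<Rightarrow> nat" where
  "mrank indep X = Max {card I | I. I \<subseteq> X \<and> indep I}"

definition loopless :: "nat set \<Rightarrow> (nat set \<Rightarrow> bool) \<Rightarrow> bool" where
  "loopless E indep \<longleftrightarrow> (\<forall>x\<in>E. indep {x})"

definition simple_matroid :: "nat set \<Rightarrow> (nat set \<Rightarrow> bool) \<Rightarrow> bool" where
  "simple_matroid E indep \<longleftrightarrow> (\<forall>X. X \<subseteq> E \<and> card X \<le> 2 \<longrightarrow> indep X)"

text \<open>A degeneration of M[K]: a loopless rank-3 matroid on [3m] whose family of
  3-element circuits contains C[K] (which is the family of 3-element circuits of M[K]).\<close>
definition degeneration_of_MK :: "nat \<Rightarrow> (nat \<Rightarrow> nat \<Rightarrow> nat) \<Rightarrow> (nat set \<Rightarrow> bool) \<Rightarrow> bool" where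
  "degeneration_of_MK m K indep \<longleftrightarrow>
     matroid {1..3*m} indep \<and> loopless {1..3*m} indep \<and> mrank indep {1..3*m} = 3 \<and>
     CK m K \<subseteq> {C \<in> circuits {1..3*m} indep. card C = 3}"

definition restriction_uniform2 :: "(nat set \<Rightarrow> bool) \<Rightarrow> nat set \<Rightarrow> bool" where
  "restriction_uniform2 indep X \<longleftrightarrow> (\<forall>Y. Y \<subseteq> X \<longrightarrow> (indep Y \<longleftrightarrow> card Y \<le> 2))"

text \<open>An element of the exterior algebra E on generators e_1, ..., e_n over a field 'a
  is represented by its coefficient function: f S is the coefficient of
  e_S = e_{s_1} \<and> ... \<and> e_{s_p} (s_1 < ... < s_p, S = {s_1,...,s_p}).\<close>

definition ebas :: "nat set \<Rightarrow> nat set \<Rightarrow> 'a::field" where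
  "ebas S = (\<lambda>T. if T = S then 1 else 0)"

text \<open>e_S \<and> e_T = ext_sign S T * e_{S \<union> T} for disjoint S, T.\<close>
definition ext_sign :: "nat set \<Rightarrow> nat set \<Rightarrow> 'a::field" where
  "ext_sign S T = (-1) ^ card {(s, t). s \<in> S \<and> t \<in> T \<and> t < s}"

definition wedge :: "(nat set \<Rightarrow> 'a::field) \<Rightarrow> (nat set \<Rightarrow> 'a) \<Rightarrow> nat set \<Rightarrow> 'a" where
  "wedge f g = (\<lambda>U. if finite U then (\<Sum>S\<in>Pow U. ext_sign S (U - S) * f S * g (U - S)) else 0)"

definition bd :: "nat set \<Rightarrow> nat set \<Rightarrow> 'a::field" where
  "bd C = (\<lambda>T. \<Sum>c\<in>C. if T = C - {c} then (-1) ^ card {x \<in> C. x < c} else 0)"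

definition escale :: "'a::field \<Rightarrow> (nat set \<Rightarrow> 'a) \<Rightarrow> nat set \<Rightarrow> 'a" where
  "escale c f = (\<lambda>S. c * f S)"

definition Edeg :: "nat \<Rightarrow> nat \<Rightarrow> (nat set \<Rightarrow> 'a::field) set" where
  "Edeg n p = {f. \<forall>S. f S \<noteq> 0 \<longrightarrow> S \<subseteq> {1..n} \<and> card S = p}"

definition os_ideal :: "nat \<Rightarrow> nat set set \<Rightarrow> (nat set \<Rightarrow> 'a::field) set" where
  "os_ideal n Cs = module.span escale
     {wedge (wedge (ebas S) (bd C)) (ebas T) | S C T. S \<subseteq> {1..n} \<and> T \<subseteq> {1..n} \<and> C \<in> Cs}"

text \<open>dim H^p(A, w) for A = E / I (I = os_ideal n Cs, a graded ideal) and the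
  differential w \<and> - : with Z = {x \<in> E^p. w \<and> x \<in> I} (preimage of the cocycles) and
  B = w \<and> E^(p-1) + I^p (preimage of the coboundaries), H^p = Z / B, so
  dim H^p = dim Z - dim B.\<close>
definition os_cohom_dim :: "nat \<Rightarrow> nat set set \<Rightarrow> (nat set \<Rightarrow> 'a::field) \<Rightarrow> nat \<Rightarrow> nat" where
  "os_cohom_dim n Cs w p =
     (let I = os_ideal n Cs;
          Z = {x \<in> Edeg n p. wedge w x \<in> I};
          B = {wedge w y + z | y z. y \<in> (if p = 0 then {0} else Edeg n (p - 1)) \<and> z \<in> I \<inter> Edeg n p}
      in vector_space.dim escale Z - vector_space.dim escale B)"

definition oneform :: "nat \<Rightarrow> 'a::field \<Rightarrow> 'a \<Rightarrow> 'a \<Rightarrow> nat set \<Rightarrow> 'a" where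
  "oneform m l1 l2 l3 =
     (\<lambda>S. if \<exists>i. S = {i} \<and> 1 \<le> i \<and> i \<le> m then l1
          else if \<exists>i. S = {i} \<and> m < i \<and> i \<le> 2*m then l2
          else if \<exists>i. S = {i} \<and> 2*m < i \<and> i \<le> 3*m then l3
          else 0)"

end

theory Submission
  imports Defs
begin

text \<open>
  M[K;J] is the rank-3 matroid whose lines are X(J) and the cells {i, m+j, 2m+K i j} of K not
  contained in X(J). Two cells share at most one point by the Latin property, and a cell meeting
  X(J) twice lies inside X(J) by the subsquare property; so these lines form a partial linear
  space, which defines a simple matroid in which X(J) is a line.

  In degrees at most two the Orlik-Solomon ideal is spanned by the boundaries of the 3-point
  subsets of lines. Hence a one-form x is a cocycle of e_lambda iff e_lambda \<and> x vanishes on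
  the pairs lying on no line and satisfies the boundary relations of every 3-point line. Pairs in
  one block with a point outside X(J) lie on no line, which makes x constant on every block where
  lambda is non-zero; the cells outside X(J) (they exist because J is proper) then make x constant
  on all three blocks with values summing to zero. Conversely, for such x the product
  e_lambda \<and> x is a multiple of the sum of the boundaries of all cells. So the cocycles form
  a two-dimensional space, while the coboundaries are the multiples of e_lambda because the
  ideal has no part of degree one.
\<close>

lemma escale_apply [simp]: "escale c f S = c * f S"
  by (simp add: escale_def)

lemma escale_one [simp]: "escale 1 f = f"
  by (simp add: escale_def)

lemma vector_space_escale: "vector_space (escale :: 'a::field \<Rightarrow> (nat set \<Rightarrow> 'a) \<Rightarrow> _)"
  by unfold_locales (auto simp: escale_def fun_eq_iff algebra_simps)

lemma module_escale: "module (escale :: 'a::field \<Rightarrow> (nat set \<Rightarrow> 'a) \<Rightarrow> _)"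
  using vector_space_escale module_iff_vector_space by blast

lemma sum_fun_apply: "(\<Sum>x\<in>A. f x) U = (\<Sum>x\<in>A. f x U)"
  by (induction A rule: infinite_finite_induct) auto

lemma linear_functional_zero_on_span:
  fixes \<phi> :: "(nat set \<Rightarrow> 'a::field) \<Rightarrow> 'a"
  assumes add: "\<And>f g. \<phi> (f + g) = \<phi> f + \<phi> g" and scale: "\<And>c f. \<phi> (escale c f) = c * \<phi> f"
    and zero: "\<And>g. g \<in> G \<Longrightarrow> \<phi> g = 0" and y: "y \<in> module.span escale G"
  shows "\<phi> y = 0"
proof (rule module.span_induct[OF module_escale y, of "\<lambda>y. \<phi> y = 0"])
  have "\<phi> 0 = 0"
    using scale[of 0 0] by (simp add: escale_def zero_fun_def)
  then show "module.subspace escale {y. \<phi> y = 0}"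
    unfolding module.subspace_def[OF module_escale] using add scale by auto
qed (use zero in auto)

lemma Edeg_nonzero: "f \<in> Edeg n p \<Longrightarrow> f U \<noteq> 0 \<Longrightarrow> U \<subseteq> {1..n} \<and> finite U \<and> card U = p"
  unfolding Edeg_def using finite_subset by blast

lemma ebas_Edeg: "S \<subseteq> {1..n} \<Longrightarrow> ebas S \<in> Edeg n (card S)"
  by (auto simp: Edeg_def ebas_def)

lemma bd_nonzero:
  assumes "bd C U \<noteq> 0"
  obtains c where "c \<in> C" "U = C - {c}"
proof -
  have "(\<Sum>c\<in>C. if U = C - {c} then (-1::'a) ^ card {x \<in> C. x < c} else 0) \<noteq> 0"
    using assms unfolding bd_def .
  then obtain c where "c \<in> C" "(if U = C - {c} then (-1::'a) ^ card {x \<in> C. x < c} else 0) \<noteq> 0"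
    by (rule sum.not_neutral_contains_not_neutral)
  then show thesis using that by (simp split: if_splits)
qed

lemma bd_Edeg: "C \<subseteq> {1..n} \<Longrightarrow> bd C \<in> Edeg n (card C - 1)"
  unfolding Edeg_def
proof (intro CollectI allI impI)
  fix U assume C: "C \<subseteq> {1..n}" and "bd C U \<noteq> 0"
  then obtain c where "c \<in> C" "U = C - {c}" by (blast elim: bd_nonzero)
  moreover have "finite C" using C finite_subset by blast
  ultimately show "U \<subseteq> {1..n} \<and> card U = card C - 1"
    using C by auto
qed

lemma wedge_Edeg:
  assumes f: "f \<in> Edeg n p" and g: "g \<in> Edeg n q"
  shows "wedge f g \<in> Edeg n (p + q)"
  unfolding Edeg_def
proof (intro CollectI allI impI)
  fix U assume "wedge f g U \<noteq> 0"
  then have U: "finite U" and "(\<Sum>S\<in>Pow U. ext_sign S (U - S) * f S * g (U - S)) \<noteq> 0"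
    by (auto simp: wedge_def split: if_splits)
  from this(2) obtain S where "S \<in> Pow U" "ext_sign S (U - S) * f S * g (U - S) \<noteq> 0"
    by (rule sum.not_neutral_contains_not_neutral)
  then have S: "S \<subseteq> U" "f S \<noteq> 0" "g (U - S) \<noteq> 0" by auto
  then have "S \<subseteq> {1..n}" "card S = p" "U - S \<subseteq> {1..n}" "card (U - S) = q"
    using f g Edeg_nonzero by blast+
  moreover have "card U = card S + card (U - S)"
    using U S(1) by (simp add: card_Diff_subset card_mono finite_subset)
  ultimately show "U \<subseteq> {1..n} \<and> card U = p + q" by auto
qed

lemma wedge_Edeg0_left:
  assumes y: "y \<in> Edeg n 0" and f: "f \<in> Edeg n p"
  shows "wedge y f = escale (y {}) f"
proof
  fix U
  have y0: "S = {}" if "y S \<noteq> 0" for S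
    using Edeg_nonzero[OF y that] by auto
  show "wedge y f U = escale (y {}) f U"
  proof (cases "finite U")
    case True
    have "(\<Sum>S\<in>Pow U. ext_sign S (U - S) * y S * f (U - S)) =
          (\<Sum>S\<in>{{}}. ext_sign S (U - S) * y S * f (U - S))"
      by (rule sum.mono_neutral_right) (use True y0 in auto)
    then show ?thesis using True by (simp add: wedge_def ext_sign_def)
  next
    case False
    then show ?thesis using Edeg_nonzero[OF f] by (auto simp: wedge_def)
  qed
qed

lemma wedge_Edeg0_right:
  assumes f: "f \<in> Edeg n p" and y: "y \<in> Edeg n 0"
  shows "wedge f y = escale (y {}) f"
proof
  fix U
  have y0: "S = {}" if "y S \<noteq> 0" for S
    using Edeg_nonzero[OF y that] by auto
  show "wedge f y U = escale (y {}) f U"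
  proof (cases "finite U")
    case True
    have "(\<Sum>S\<in>Pow U. ext_sign S (U - S) * f S * y (U - S)) =
          (\<Sum>S\<in>{U}. ext_sign S (U - S) * f S * y (U - S))"
      by (rule sum.mono_neutral_right) (use True y0 in auto)
    then show ?thesis using True by (simp add: wedge_def ext_sign_def mult.commute)
  next
    case False
    then show ?thesis using Edeg_nonzero[OF f] by (auto simp: wedge_def)
  qed
qed

lemma wedge_Edeg1_pair:
  assumes f: "f \<in> Edeg n 1" and g: "g \<in> Edeg n 1" and "a < b"
  shows "wedge f g {a, b} = f {a} * g {b} - f {b} * g {a}"
proof -
  have vanish: "h {} = 0" "h {a, b} = 0" if "h \<in> Edeg n 1" for h :: "nat set \<Rightarrow> 'a"
    using Edeg_nonzero[OF that] \<open>a < b\<close> by fastforce+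
  have no_inversion: "{(s, t). s = a \<and> t = b \<and> t < s} = {}"
    using \<open>a < b\<close> by auto
  have sign_ab: "ext_sign {a} {b} = (1::'a)"
    by (simp add: ext_sign_def no_inversion)
  have one_inversion: "{(s, t). s = b \<and> t = a \<and> t < s} = {(b, a)}"
    using \<open>a < b\<close> by auto
  have sign_ba: "ext_sign {b} {a} = (-1::'a)"
    by (simp add: ext_sign_def one_inversion)
  have "wedge f g {a, b} = (\<Sum>S\<in>Pow {a, b}. ext_sign S ({a, b} - S) * f S * g ({a, b} - S))"
    unfolding wedge_def by (simp only: finite.emptyI finite.insertI if_True)
  also have "\<dots> = (\<Sum>S\<in>{{a}, {b}}. ext_sign S ({a, b} - S) * f S * g ({a, b} - S))"
  proof (rule sum.mono_neutral_right)
    have "Pow {a, b} = {{}, {a, b}, {a}, {b}}" by blast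
    then show "\<forall>S\<in>Pow {a, b} - {{a}, {b}}. ext_sign S ({a, b} - S) * f S * g ({a, b} - S) = 0"
      using vanish f g by auto
  qed auto
  also have "\<dots> = ext_sign {a} {b} * f {a} * g {b} + ext_sign {b} {a} * f {b} * g {a}"
    using \<open>a < b\<close> by (auto simp: insert_Diff_if)
  also have "\<dots> = f {a} * g {b} - f {b} * g {a}"
    by (simp add: sign_ab sign_ba)
  finally show ?thesis .
qed

lemma bd_three:
  assumes "a < b" "b < c"
  shows "bd {a, b, c} U = (if U = {b, c} then 1 else 0) + (if U = {a, c} then -1 else 0)
                          + (if U = {a, b} then 1 else 0)"
proof -
  have below: "{x \<in> {a, b, c}. x < a} = {}" "{x \<in> {a, b, c}. x < b} = {a}"
    "{x \<in> {a, b, c}. x < c} = {a, b}"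
    using assms by auto
  have removed: "{a, b, c} - {a} = {b, c}" "{a, b, c} - {b} = {a, c}" "{a, b, c} - {c} = {a, b}"
    using assms by auto
  have sum3: "(\<Sum>x\<in>{a, b, c}. h x) = h a + h b + h c" for h :: "nat \<Rightarrow> 'a"
    using assms by (simp add: add.assoc)
  have "card {a, b} = 2" using assms by simp
  then have signs: "(-1::'a) ^ card ({}::nat set) = 1" "(-1::'a) ^ card {a} = -1"
    "(-1::'a) ^ card {a, b} = 1"
    by simp_all
  have distinct: "{a, b} \<noteq> {b, c}" "{a, b} \<noteq> {a, c}" "{a, c} \<noteq> {b, c}"
    using assms by (auto simp: doubleton_eq_iff)
  show ?thesis
    unfolding bd_def sum3 below removed signs by (simp add: distinct distinct[symmetric])
qed

section \<open>The Orlik-Solomon ideal in degrees at most two\<close>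

lemma wedge_ebas_empty_bd:
  assumes "C \<subseteq> {1..n}"
  shows "wedge (wedge (ebas {}) (bd C)) (ebas {}) = bd C"
proof -
  have bd: "bd C \<in> Edeg n (card C - 1)" using assms by (rule bd_Edeg)
  have unit: "(ebas {} :: nat set \<Rightarrow> 'a) \<in> Edeg n 0" "ebas {} {} = (1::'a)"
    using ebas_Edeg[of "{}" n] by (auto simp: ebas_def)
  show ?thesis
    using unit(2) wedge_Edeg0_left[OF unit(1) bd] wedge_Edeg0_right[OF bd unit(1)] by simp
qed

lemma os_ideal_generator_cases:
  assumes Cs: "\<forall>C\<in>Cs. C \<subseteq> {1..n} \<and> 3 \<le> card C"
    and "g \<in> {wedge (wedge (ebas S) (bd C)) (ebas T) | S C T. S \<subseteq> {1..n} \<and> T \<subseteq> {1..n} \<and> C \<in> Cs}"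
  obtains (high_degree) d where "g \<in> Edeg n d" "3 \<le> d"
    | (circuit) C where "C \<in> Cs" "card C = 3" "g = bd C"
proof -
  obtain S C T where g: "g = wedge (wedge (ebas S) (bd C)) (ebas T)"
    and S: "S \<subseteq> {1..n}" and T: "T \<subseteq> {1..n}" and C: "C \<in> Cs"
    using assms(2) by blast
  have "finite S" "finite T" using S T finite_subset by blast+
  have deg: "g \<in> Edeg n (card S + (card C - 1) + card T)"
    unfolding g using Cs[rule_format, OF C] S T by (intro wedge_Edeg ebas_Edeg bd_Edeg) auto
  show thesis
  proof (cases "3 \<le> card S + (card C - 1) + card T")
    case True
    with deg show thesis by (rule high_degree)
  next
    case False
    with Cs[rule_format, OF C] have "card S = 0" "card T = 0" "card C = 3" by auto
    with \<open>finite S\<close> \<open>finite T\<close> have "S = {}" "T = {}" by auto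
    have "g = bd C"
      unfolding g \<open>S = {}\<close> \<open>T = {}\<close>
      by (rule wedge_ebas_empty_bd) (use Cs[rule_format, OF C] in auto)
    with C \<open>card C = 3\<close> show thesis by (rule circuit)
  qed
qed

lemma os_ideal_functional_zero:
  fixes \<phi> :: "(nat set \<Rightarrow> 'a::field) \<Rightarrow> 'a"
  assumes Cs: "\<forall>C\<in>Cs. C \<subseteq> {1..n} \<and> 3 \<le> card C"
    and add: "\<And>f g. \<phi> (f + g) = \<phi> f + \<phi> g" and scale: "\<And>c f. \<phi> (escale c f) = c * \<phi> f"
    and low_degree: "\<And>g. \<forall>U. card U \<le> 2 \<longrightarrow> g U = 0 \<Longrightarrow> \<phi> g = 0"
    and circuit: "\<And>C. C \<in> Cs \<Longrightarrow> card C = 3 \<Longrightarrow> \<phi> (bd C) = 0"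
    and y: "y \<in> os_ideal n Cs"
  shows "\<phi> y = 0"
  using add scale _ y[unfolded os_ideal_def]
proof (rule linear_functional_zero_on_span)
  fix g :: "nat set \<Rightarrow> 'a" assume "g \<in> {wedge (wedge (ebas S) (bd C)) (ebas T) | S C T.
    S \<subseteq> {1..n} \<and> T \<subseteq> {1..n} \<and> C \<in> Cs}"
  then consider (high_degree) d where "g \<in> Edeg n d" "3 \<le> d"
    | (boundary) C where "C \<in> Cs" "card C = 3" "g = bd C"
    by (rule os_ideal_generator_cases[OF Cs]) blast+
  then show "\<phi> g = 0"
  proof cases
    case (high_degree d)
    then have "\<forall>U. card U \<le> 2 \<longrightarrow> g U = 0" using Edeg_nonzero by fastforce
    then show ?thesis by (rule low_degree)
  qed (simp add: circuit)
qed

lemma os_ideal_coeff_card_le_1: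
  assumes Cs: "\<forall>C\<in>Cs. C \<subseteq> {1..n} \<and> 3 \<le> card C"
    and y: "y \<in> os_ideal n Cs" and U: "card U \<le> 1"
  shows "y U = 0"
proof (rule os_ideal_functional_zero[OF Cs _ _ _ _ y, of "\<lambda>y. y U"])
  fix C assume C: "C \<in> Cs" "card C = 3"
  show "bd C U = 0"
  proof (rule ccontr)
    assume "bd C U \<noteq> 0"
    then obtain c where "c \<in> C" "U = C - {c}" by (rule bd_nonzero)
    moreover have "finite C" using Cs[rule_format, OF C(1)] finite_subset by blast
    ultimately show False using C(2) U by simp
  qed
qed (use U in auto)

lemma os_ideal_Edeg1_eq_0:
  assumes Cs: "\<forall>C\<in>Cs. C \<subseteq> {1..n} \<and> 3 \<le> card C"
    and "y \<in> os_ideal n Cs" "y \<in> Edeg n 1"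
  shows "y = 0"
proof
  fix U show "y U = 0 U"
    using os_ideal_coeff_card_le_1[OF Cs assms(2)] Edeg_nonzero[OF assms(3), of U]
    by (cases "card U \<le> 1") auto
qed

lemma bd_in_os_ideal:
  assumes "C \<in> Cs" "C \<subseteq> {1..n}"
  shows "bd C \<in> os_ideal n Cs"
proof -
  have "bd C = wedge (wedge (ebas {}) (bd C)) (ebas {})"
    using assms(2) by (rule wedge_ebas_empty_bd[symmetric])
  also have "\<dots> \<in> os_ideal n Cs"
    unfolding os_ideal_def using assms(1) by (intro module.span_base[OF module_escale]) blast
  finally show ?thesis .
qed

lemma coboundaries_degree_1:
  assumes Cs: "\<forall>C\<in>Cs. C \<subseteq> {1..n} \<and> 3 \<le> card C" and w: "w \<in> Edeg n 1"
  shows "{wedge w y + z | y z. y \<in> Edeg n 0 \<and> z \<in> os_ideal n Cs \<inter> Edeg n 1} =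
    range (\<lambda>k. escale k w)"
proof (intro equalityI subsetI)
  fix v assume "v \<in> {wedge w y + z | y z. y \<in> Edeg n 0 \<and> z \<in> os_ideal n Cs \<inter> Edeg n 1}"
  then obtain y z where v: "v = wedge w y + z" and y: "y \<in> Edeg n 0"
    and z: "z \<in> os_ideal n Cs" "z \<in> Edeg n 1" by blast
  have "z = 0" using os_ideal_Edeg1_eq_0[OF Cs z] .
  then show "v \<in> range (\<lambda>k. escale k w)" using v wedge_Edeg0_right[OF w y] by simp
next
  fix v assume "v \<in> range (\<lambda>k. escale k w)"
  then obtain k where v: "v = escale k w" by blast
  define y :: "nat set \<Rightarrow> 'a" where "y = escale k (ebas {})"
  have y: "y \<in> Edeg n 0" by (auto simp: y_def Edeg_def ebas_def)
  have "v = wedge w y + 0" using wedge_Edeg0_right[OF w y] v by (simp add: y_def ebas_def)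
  moreover have "(0 :: nat set \<Rightarrow> 'a) \<in> os_ideal n Cs \<inter> Edeg n 1"
    unfolding os_ideal_def Edeg_def using module.span_zero[OF module_escale] by auto
  ultimately show "v \<in> {wedge w y + z | y z. y \<in> Edeg n 0 \<and> z \<in> os_ideal n Cs \<inter> Edeg n 1}"
    using y by blast
qed

section \<open>Rank-three matroids of partial linear spaces\<close>

locale partial_linear_space =
  fixes E :: "nat set" and Ls :: "nat set set"
  assumes finite_E: "finite E"
    and lines_meet: "\<lbrakk>L \<in> Ls; L' \<in> Ls; p \<noteq> q; {p, q} \<subseteq> L; {p, q} \<subseteq> L'\<rbrakk> \<Longrightarrow> L = L'"
begin

definition indep :: "nat set \<Rightarrow> bool" where
  "indep I \<longleftrightarrow> I \<subseteq> E \<and> (card I \<le> 2 \<or> card I = 3 \<and> (\<forall>L\<in>Ls. \<not> I \<subseteq> L))"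

lemma indep_finite: "indep I \<Longrightarrow> finite I"
  unfolding indep_def using finite_E finite_subset by blast

lemma indep_card_le_3: "indep I \<Longrightarrow> card I \<le> 3"
  unfolding indep_def by auto

lemma indep_augment:
  assumes I: "indep I" and J: "indep J" and less: "card I < card J"
  shows "\<exists>x\<in>J - I. indep (insert x I)"
proof -
  have "finite I" using I by (rule indep_finite)
  have "I \<subseteq> E" "J \<subseteq> E" using I J unfolding indep_def by auto
  have "\<not> J \<subseteq> I" using less card_mono[OF \<open>finite I\<close>, of J] by linarith
  then obtain x0 where x0: "x0 \<in> J" "x0 \<notin> I" by blast
  have "card I \<le> 2" using less indep_card_le_3[OF J] by linarith
  show ?thesis
  proof (cases "card I \<le> 1")
    case True
    then have "indep (insert x0 I)"
      using x0 \<open>finite I\<close> \<open>J \<subseteq> E\<close> \<open>I \<subseteq> E\<close> unfolding indep_def by (auto simp: card_insert_if)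
    with x0 show ?thesis by blast
  next
    case False
    with \<open>card I \<le> 2\<close> have "card I = 2" by simp
    then obtain p q where pq: "I = {p, q}" "p \<noteq> q" by (meson card_2_iff)
    have "card J = 3" using less indep_card_le_3[OF J] \<open>card I = 2\<close> by linarith
    then have J_off_lines: "\<forall>L\<in>Ls. \<not> J \<subseteq> L" using J unfolding indep_def by auto
    have indep_insert: "indep (insert x I)"
      if "x \<in> J" "x \<notin> I" "\<forall>L\<in>Ls. \<not> insert x I \<subseteq> L" for x
      using that \<open>card I = 2\<close> \<open>finite I\<close> \<open>I \<subseteq> E\<close> \<open>J \<subseteq> E\<close> unfolding indep_def by auto
    show ?thesis
    proof (cases "\<exists>L\<in>Ls. I \<subseteq> L")
      case True
      then obtain L where L: "L \<in> Ls" "I \<subseteq> L" by blast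
      then obtain x where x: "x \<in> J" "x \<notin> L" using J_off_lines by blast
      have "L' = L" if "L' \<in> Ls" "insert x I \<subseteq> L'" for L'
        using lines_meet[OF that(1) L(1) pq(2)] that(2) L(2) pq(1) by simp
      then have "\<forall>L'\<in>Ls. \<not> insert x I \<subseteq> L'" using x(2) by blast
      moreover have "x \<notin> I" using x(2) L(2) by blast
      ultimately show ?thesis using indep_insert[OF x(1)] x(1) by blast
    next
      case False
      then have "\<forall>L\<in>Ls. \<not> insert x0 I \<subseteq> L" by blast
      then show ?thesis using indep_insert[OF x0] x0 by blast
    qed
  qed
qed

lemma matroid: "matroid E indep"
  unfolding matroid_def
proof (intro conjI allI impI)
  show "indep {}" by (simp add: indep_def)
next
  fix I assume "indep I" then show "I \<subseteq> E" by (simp add: indep_def)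
next
  fix I J assume IJ: "indep J \<and> I \<subseteq> J"
  show "indep I"
  proof (cases "I = J")
    case False
    with IJ have "I \<subset> J" by blast
    then have "card I < card J" using indep_finite IJ psubset_card_mono by blast
    then have "card I \<le> 2" using indep_card_le_3 IJ by fastforce
    with IJ show ?thesis unfolding indep_def by auto
  qed (use IJ in simp)
next
  fix I J assume "indep I \<and> indep J \<and> card I < card J"
  then show "\<exists>x\<in>J - I. indep (insert x I)" using indep_augment by blast
qed (rule finite_E)

lemma loopless: "loopless E indep"
  by (simp add: loopless_def indep_def)

lemma simple: "simple_matroid E indep"
  by (simp add: simple_matroid_def indep_def)

lemma mrank_eq_3:
  assumes "T \<subseteq> E" "card T = 3" "\<forall>L\<in>Ls. \<not> T \<subseteq> L"
  shows "mrank indep E = 3"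
  unfolding mrank_def
proof (rule Max_eqI)
  show "finite {card I |I. I \<subseteq> E \<and> indep I}"
    by (rule finite_subset[of _ "{0..3}"]) (auto dest: indep_card_le_3)
  have "indep T" using assms unfolding indep_def by simp
  then show "3 \<in> {card I |I. I \<subseteq> E \<and> indep I}"
    using assms(1,2) by (metis (mono_tags, lifting) mem_Collect_eq)
qed (auto dest: indep_card_le_3)

lemma restriction_uniform2_line:
  assumes "L \<in> Ls" "L \<subseteq> E"
  shows "restriction_uniform2 indep L"
  using assms unfolding restriction_uniform2_def indep_def by auto

lemma circuitD:
  assumes "C \<in> circuits E indep"
  shows "C \<subseteq> E" "3 \<le> card C" "card C = 3 \<Longrightarrow> \<exists>L\<in>Ls. C \<subseteq> L"
  using assms unfolding circuits_def indep_def by auto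

lemma circuitI:
  assumes "C \<subseteq> E" "card C = 3" "L \<in> Ls" "C \<subseteq> L"
  shows "C \<in> circuits E indep"
proof -
  have "indep D" if "D \<subset> C" for D
  proof -
    have "card D < 3" using that assms(1,2) finite_E psubset_card_mono finite_subset by metis
    then show ?thesis using that assms(1) unfolding indep_def by auto
  qed
  then show ?thesis using assms unfolding circuits_def indep_def by auto
qed

lemma circuits_range:
  assumes "E \<subseteq> {1..n}"
  shows "\<forall>C\<in>circuits E indep. C \<subseteq> {1..n} \<and> 3 \<le> card C"
  using assms circuitD by blast

lemma os_ideal_pair_off_lines:
  assumes E: "E \<subseteq> {1..n}" and y: "y \<in> os_ideal n (circuits E indep)"
    and off: "\<forall>L\<in>Ls. \<not> {p, q} \<subseteq> L" and "p \<noteq> q"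
  shows "y {p, q} = 0"
proof (rule os_ideal_functional_zero[OF circuits_range[OF E] _ _ _ _ y, of "\<lambda>y. y {p, q}"])
  fix C assume C: "C \<in> circuits E indep" "card C = 3"
  show "bd C {p, q} = 0"
  proof (rule ccontr)
    assume "bd C {p, q} \<noteq> 0"
    then obtain c where "{p, q} = C - {c}" by (rule bd_nonzero)
    then have "{p, q} \<subseteq> C" by auto
    moreover obtain L where "L \<in> Ls" "C \<subseteq> L" using circuitD(3)[OF C] by blast
    ultimately show False using off by (meson subset_trans)
  qed
qed (use \<open>p \<noteq> q\<close> in auto)

lemma os_ideal_triangle:
  assumes E: "E \<subseteq> {1..n}" and y: "y \<in> os_ideal n (circuits E indep)"
    and L: "{a, b, c} \<in> Ls" and "a < b" "b < c"
  shows "y {a, b} + y {a, c} = 0" "y {b, c} + y {a, c} = 0"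
proof -
  let ?L = "{a, b, c}"
  have "card ?L = 3" using \<open>a < b\<close> \<open>b < c\<close> by auto
  have off_triangle: "bd C P = (0::'a)"
    if C: "C \<in> circuits E indep" "card C = 3" "C \<noteq> ?L" and P: "P \<subseteq> ?L" "card P = 2"
    for C P
  proof (rule ccontr)
    assume "bd C P \<noteq> 0"
    then obtain x where "P = C - {x}" by (rule bd_nonzero)
    obtain L' where L': "L' \<in> Ls" "C \<subseteq> L'" using circuitD(3)[OF C(1,2)] by blast
    with \<open>P = C - {x}\<close> have "P \<subseteq> L'" by auto
    obtain p q where "P = {p, q}" "p \<noteq> q" using P(2) by (meson card_2_iff)
    then have "L' = ?L" using lines_meet[OF L'(1) L] \<open>P \<subseteq> L'\<close> P(1) by simp
    then have "C = ?L"
      using L'(2) C(2) \<open>card ?L = 3\<close> by (metis card_subset_eq finite.emptyI finite.insertI)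
    with C(3) show False ..
  qed
  have distinct: "{a, b} \<noteq> {a, c}" "{a, b} \<noteq> {b, c}" "{a, c} \<noteq> {b, c}"
    using \<open>a < b\<close> \<open>b < c\<close> by (auto simp: doubleton_eq_iff)
  have boundary: "bd ?L {a, b} = (1::'a)" "bd ?L {a, c} = (-1::'a)" "bd ?L {b, c} = (1::'a)"
    by (simp_all add: bd_three[OF \<open>a < b\<close> \<open>b < c\<close>] distinct distinct[symmetric])
  have pairs: "card {a, b} = 2" "card {a, c} = 2" "card {b, c} = 2"
    using \<open>a < b\<close> \<open>b < c\<close> by auto
  show "y {a, b} + y {a, c} = 0"
  proof (rule os_ideal_functional_zero[OF circuits_range[OF E] _ _ _ _ y])
    fix C assume C: "C \<in> circuits E indep" "card C = 3"
    show "bd C {a, b} + bd C {a, c} = (0::'a)"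
    proof (cases "C = ?L")
      case False
      then show ?thesis using off_triangle[OF C False] pairs by simp
    qed (simp add: boundary)
  qed (use pairs in \<open>auto simp: algebra_simps\<close>)
  show "y {b, c} + y {a, c} = 0"
  proof (rule os_ideal_functional_zero[OF circuits_range[OF E] _ _ _ _ y])
    fix C assume C: "C \<in> circuits E indep" "card C = 3"
    show "bd C {b, c} + bd C {a, c} = (0::'a)"
    proof (cases "C = ?L")
      case False
      then show ?thesis using off_triangle[OF C False] pairs by simp
    qed (simp add: boundary)
  qed (use pairs in \<open>auto simp: algebra_simps\<close>)
qed


lemma os_ideal_wedge_off_lines:
  assumes E: "E \<subseteq> {1..n}" and f: "f \<in> Edeg n 1" and x: "x \<in> Edeg n 1"
    and fx: "wedge f x \<in> os_ideal n (circuits E indep)"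
    and off: "\<forall>L\<in>Ls. \<not> {p, q} \<subseteq> L" and "p \<noteq> q"
  shows "f {p} * x {q} = f {q} * x {p}"
proof (cases "p < q")
  case True
  show ?thesis
    using os_ideal_pair_off_lines[OF E fx off \<open>p \<noteq> q\<close>] wedge_Edeg1_pair[OF f x True] by simp
next
  case False
  with \<open>p \<noteq> q\<close> have "q < p" by simp
  have "\<forall>L\<in>Ls. \<not> {q, p} \<subseteq> L" using off by (simp add: insert_commute)
  then show ?thesis
    using os_ideal_pair_off_lines[OF E fx _ \<open>p \<noteq> q\<close>[symmetric]] wedge_Edeg1_pair[OF f x \<open>q < p\<close>]
    by simp
qed

text \<open>Rewritten with f{a} + f{b} + f{c} = 0, the two triangle relations say that f{a}, f{b}
  and f{c} each annihilate x{a} + x{b} + x{c}.\<close>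

lemma os_ideal_wedge_triangle:
  assumes E: "E \<subseteq> {1..n}" and f: "f \<in> Edeg n 1" and x: "x \<in> Edeg n 1"
    and fx: "wedge f x \<in> os_ideal n (circuits E indep)"
    and L: "{a, b, c} \<in> Ls" and "a < b" "b < c"
    and sum_f: "f {a} + f {b} + f {c} = 0" and nonzero: "f {a} \<noteq> 0 \<or> f {b} \<noteq> 0 \<or> f {c} \<noteq> 0"
  shows "x {a} + x {b} + x {c} = 0"
proof -
  define \<epsilon> where "\<epsilon> = x {a} + x {b} + x {c}"
  note rel = os_ideal_triangle[OF E fx L \<open>a < b\<close> \<open>b < c\<close>]
  note ab = wedge_Edeg1_pair[OF f x \<open>a < b\<close>] and bc = wedge_Edeg1_pair[OF f x \<open>b < c\<close>]
    and ac = wedge_Edeg1_pair[OF f x less_trans[OF \<open>a < b\<close> \<open>b < c\<close>]]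
  have fc: "f {c} = - f {a} - f {b}"
    using sum_f by (simp add: algebra_simps eq_neg_iff_add_eq_0)
  have "f {a} * \<epsilon> = wedge f x {a, b} + wedge f x {a, c}"
    unfolding \<epsilon>_def ab ac fc by (simp add: algebra_simps)
  moreover have "f {b} * \<epsilon> = wedge f x {b, c} - wedge f x {a, b}"
    unfolding \<epsilon>_def ab bc fc by (simp add: algebra_simps)
  moreover have "f {c} * \<epsilon> = - (wedge f x {b, c} + wedge f x {a, c})"
    unfolding \<epsilon>_def bc ac fc by (simp add: algebra_simps)
  moreover have "wedge f x {a, b} = - wedge f x {a, c}" "wedge f x {b, c} = - wedge f x {a, c}"
    using rel by (simp_all add: eq_neg_iff_add_eq_0)
  ultimately have "f {a} * \<epsilon> = 0" "f {b} * \<epsilon> = 0" "f {c} * \<epsilon> = 0"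
    by simp_all
  with nonzero show ?thesis unfolding \<epsilon>_def by auto
qed

end

lemma oneform_singleton:
  "oneform m a b c {p} =
    (if 1 \<le> p \<and> p \<le> m then a else if m < p \<and> p \<le> 2*m then b
     else if 2*m < p \<and> p \<le> 3*m then c else 0)"
  unfolding oneform_def by auto

lemma oneform_blocks:
  assumes "t \<in> {1..m}"
  shows "oneform m a b c {t} = a" "oneform m a b c {m + t} = b" "oneform m a b c {2*m + t} = c"
  using assms by (auto simp: oneform_singleton)

lemma oneform_Edeg: "oneform m a b c \<in> Edeg (3*m) 1"
  unfolding Edeg_def oneform_def by auto

lemma Edeg1_eq_oneform:
  assumes x: "x \<in> Edeg (3*m) 1"
    and blocks: "\<And>t. t \<in> {1..m} \<Longrightarrow> x {t} = a \<and> x {m + t} = b \<and> x {2*m + t} = c"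
  shows "x = oneform m a b c"
proof
  fix S
  show "x S = oneform m a b c S"
  proof (cases "\<exists>p. S = {p}")
    case True
    then obtain p where S: "S = {p}" by blast
    consider "p = 0 \<or> 3*m < p" | "1 \<le> p \<and> p \<le> m" | "m < p \<and> p \<le> 2*m" | "2*m < p \<and> p \<le> 3*m"
      by linarith
    then show ?thesis
    proof cases
      case 1
      have "x {p} = 0"
      proof (rule ccontr)
        assume "x {p} \<noteq> 0"
        from Edeg_nonzero[OF x this] 1 show False by auto
      qed
      then show ?thesis using 1 S by (auto simp: oneform_singleton)
    next
      case 2
      then show ?thesis using blocks[of p] S by (simp add: oneform_singleton)
    next
      case 3
      then have t: "p - m \<in> {1..m}" "m + (p - m) = p" by auto
      then show ?thesis using blocks[OF t(1)] 3 S by (simp add: oneform_singleton)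
    next
      case 4
      then have t: "p - 2*m \<in> {1..m}" "2*m + (p - 2*m) = p" by auto
      then show ?thesis using blocks[OF t(1)] 4 S by (simp add: oneform_singleton)
    qed
  next
    case False
    then have "x S = 0" using Edeg_nonzero[OF x, of S] by (metis card_1_singletonE)
    then show ?thesis using False unfolding oneform_def by auto
  qed
qed

lemma independent_oneforms:
  assumes "m \<ge> 1"
  shows "\<not> module.dependent escale {oneform m (1::'a::field) (-1) 0, oneform m 0 1 (-1)}"
proof -
  interpret vs: vector_space "escale :: 'a \<Rightarrow> (nat set \<Rightarrow> 'a) \<Rightarrow> _" by (rule vector_space_escale)
  let ?p = "oneform m (1::'a) (-1) 0" and ?q = "oneform m (0::'a) 1 (-1)"
  have coeffs: "?p {1} = 1" "?q {1} = 0" "?q {m + 1} = 1"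
    using assms by (auto simp: oneform_singleton)
  then have "?p \<noteq> ?q" by (metis zero_neq_one)
  moreover have "?q \<noteq> 0" using coeffs(3) by (metis zero_fun_def zero_neq_one)
  moreover have "?p \<notin> range (\<lambda>k. escale k ?q)"
  proof
    assume "?p \<in> range (\<lambda>k. escale k ?q)"
    then obtain k where "?p = escale k ?q" by blast
    then have "?p {1} = k * ?q {1}" by simp
    with coeffs(1,2) show False by simp
  qed
  ultimately show ?thesis by (simp add: vs.independent_insert vs.span_singleton)
qed

lemma dim_oneforms_sum_zero:
  assumes "m \<ge> 1"
  shows "vector_space.dim escale {oneform m a b c | a b c. a + b + c = (0::'a::field)} = 2"
proof -
  interpret vs: vector_space "escale :: 'a \<Rightarrow> (nat set \<Rightarrow> 'a) \<Rightarrow> _" by (rule vector_space_escale)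
  let ?V = "{oneform m a b c | a b c. a + b + c = (0::'a)}"
  let ?p = "oneform m (1::'a) (-1) 0" and ?q = "oneform m (0::'a) 1 (-1)"
  have V_span: "?V \<subseteq> vs.span {?p, ?q}"
  proof
    fix x assume "x \<in> ?V"
    then obtain a b c where x: "x = oneform m a b c" "a + b + c = 0" by blast
    then have "c = - a - b" by (simp add: algebra_simps eq_neg_iff_add_eq_0)
    then have "x = escale a ?p + escale (a + b) ?q"
      unfolding x(1) by (auto simp: fun_eq_iff oneform_def algebra_simps)
    then show "x \<in> vs.span {?p, ?q}"
      by (simp add: vs.span_add vs.span_base vs.span_scale)
  qed
  have p_in: "?p \<in> ?V"
    unfolding mem_Collect_eq by (intro exI[of _ "1::'a"] exI[of _ "-1::'a"] exI[of _ "0::'a"]) simp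
  have q_in: "?q \<in> ?V"
    unfolding mem_Collect_eq by (intro exI[of _ "0::'a"] exI[of _ "1::'a"] exI[of _ "-1::'a"]) simp
  have "{?p, ?q} \<subseteq> vs.span ?V"
    using vs.span_base[OF p_in] vs.span_base[OF q_in] by (simp only: insert_subset empty_subsetI)
  with V_span have span_eq: "vs.span ?V = vs.span {?p, ?q}"
    unfolding vs.span_eq by (rule conjI)
  have "?p \<noteq> ?q"
  proof
    assume "?p = ?q"
    then have "?p {1} = ?q {1}" by simp
    with assms show False by (simp add: oneform_singleton)
  qed
  have "vs.dim ?V = vs.dim (vs.span ?V)"
    by (rule vs.dim_span[symmetric])
  also have "\<dots> = vs.dim {?p, ?q}"
    unfolding span_eq by (rule vs.dim_span)
  also have "\<dots> = card {?p, ?q}"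
    by (rule vs.dim_eq_card_independent[OF independent_oneforms[OF assms]])
  also have "\<dots> = 2"
    using \<open>?p \<noteq> ?q\<close> by simp
  finally show ?thesis .
qed

lemma dim_line:
  fixes w :: "nat set \<Rightarrow> 'a::field"
  assumes "w \<noteq> 0"
  shows "vector_space.dim escale (range (\<lambda>k. escale k w)) = 1"
proof -
  interpret vs: vector_space "escale :: 'a \<Rightarrow> (nat set \<Rightarrow> 'a) \<Rightarrow> _" by (rule vector_space_escale)
  have "vs.independent {w}" using assms by (simp add: vs.independent_insert)
  then have "vs.dim {w} = 1" by (simp add: vs.dim_eq_card_independent)
  then show ?thesis using vs.dim_span[of "{w}"] by (simp add: vs.span_singleton)
qed

text \<open>The coefficient at {a, b}, a < b, of E1 \<and> E2 - E1 \<and> E3 + E2 \<and> E3, where Et is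
  the sum of the generators of the t-th block.\<close>

definition block_pair_sign :: "nat \<Rightarrow> nat \<Rightarrow> nat \<Rightarrow> 'a::comm_ring_1" where
  "block_pair_sign m a b =
    (if 0 < a \<and> a \<le> m \<and> m < b \<and> b \<le> 2*m then 1 else 0)
    - (if 0 < a \<and> a \<le> m \<and> 2*m < b \<and> b \<le> 3*m then 1 else 0)
    + (if m < a \<and> a \<le> 2*m \<and> 2*m < b \<and> b \<le> 3*m then 1 else 0)"

lemma wedge_oneform_pair:
  fixes l1 l2 l3 \<alpha> \<beta> \<gamma> :: "'a::field"
  assumes "a < b" and l: "l1 + l2 + l3 = 0" and \<alpha>: "\<alpha> + \<beta> + \<gamma> = 0"
  shows "wedge (oneform m l1 l2 l3) (oneform m \<alpha> \<beta> \<gamma>) {a, b} =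
    (l1 * \<beta> - l2 * \<alpha>) * block_pair_sign m a b"
proof -
  have l3: "l3 = - l1 - l2" using l by (simp add: algebra_simps eq_neg_iff_add_eq_0)
  have \<gamma>: "\<gamma> = - \<alpha> - \<beta>" using \<alpha> by (simp add: algebra_simps eq_neg_iff_add_eq_0)
  have "wedge (oneform m l1 l2 l3) (oneform m \<alpha> \<beta> \<gamma>) {a, b} =
    oneform m l1 l2 l3 {a} * oneform m \<alpha> \<beta> \<gamma> {b} - oneform m l1 l2 l3 {b} * oneform m \<alpha> \<beta> \<gamma> {a}"
    by (rule wedge_Edeg1_pair[OF oneform_Edeg oneform_Edeg \<open>a < b\<close>])
  also have "\<dots> = (l1 * \<beta> - l2 * \<alpha>) * block_pair_sign m a b"
  proof -
    consider "a = 0 \<or> 3*m < a" | "1 \<le> a \<and> a \<le> m" | "m < a \<and> a \<le> 2*m" | "2*m < a \<and> a \<le> 3*m"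
      by linarith
    moreover consider "b \<le> m" | "m < b \<and> b \<le> 2*m" | "2*m < b \<and> b \<le> 3*m" | "3*m < b"
      by linarith
    ultimately show ?thesis
      using \<open>a < b\<close>
      by cases (cases; auto simp: oneform_singleton block_pair_sign_def l3 \<gamma> algebra_simps)+
  qed
  finally show ?thesis .
qed

lemma doubleton_eq_ordered: "(a::nat) < b \<Longrightarrow> c < d \<Longrightarrow> {a, b} = {c, d} \<longleftrightarrow> a = c \<and> b = d"
  by (auto simp: doubleton_eq_iff)

lemma sum_block_indicator:
  "(\<Sum>k\<in>{1..m}. if b = c + k then 1 else 0) =
    (if c < b \<and> b \<le> c + (m::nat) then 1 else (0::'a::comm_ring_1))"
proof -
  have "(\<Sum>k\<in>{1..m}. if b = c + k then 1 else 0) =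
      (\<Sum>k\<in>{1..m}. if k = b - c \<and> c < b then 1 else (0::'a))"
    by (rule sum.cong) auto
  also have "\<dots> = (if c < b \<and> b \<le> c + m then 1 else 0)"
    by (cases "c < b") auto
  finally show ?thesis .
qed

lemma not_all_zero_oneform:
  assumes "oneform m l1 l2 l3 \<noteq> 0"
  shows "l1 \<noteq> 0 \<or> l2 \<noteq> 0 \<or> l3 \<noteq> 0"
proof -
  from assms obtain S where "oneform m l1 l2 l3 S \<noteq> 0" by (auto simp: fun_eq_iff)
  then show ?thesis unfolding oneform_def by (auto split: if_splits)
qed

lemma two_nonzero_of_sum_zero:
  fixes l1 l2 l3 :: "'a::ab_group_add"
  assumes "l1 + l2 + l3 = 0" "l1 \<noteq> 0 \<or> l2 \<noteq> 0 \<or> l3 \<noteq> 0"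
  shows "l1 \<noteq> 0 \<and> l2 \<noteq> 0 \<or> l1 \<noteq> 0 \<and> l3 \<noteq> 0 \<or> l2 \<noteq> 0 \<and> l3 \<noteq> 0"
  using assms by (metis add.right_neutral add_0)

section \<open>The degeneration M[K;J]\<close>

definition cell :: "nat \<Rightarrow> (nat \<Rightarrow> nat \<Rightarrow> nat) \<Rightarrow> nat \<Rightarrow> nat \<Rightarrow> nat set" where
  "cell m K i j = {i, m + j, 2*m + K i j}"

lemma CK_eq_cells: "CK m K = {cell m K i j | i j. i \<in> {1..m} \<and> j \<in> {1..m}}"
  unfolding CK_def cell_def by blast

locale latin_subsquare =
  fixes m :: nat and K :: "nat \<Rightarrow> nat \<Rightarrow> nat" and Rs Cs Ss :: "nat set"
  assumes m_ge_2: "m \<ge> 2" and latin: "latin_square m K" and subsq: "subsquare m K Rs Cs Ss"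
    and proper: "card Rs < m"
begin

lemma row_bij: "i \<in> {1..m} \<Longrightarrow> bij_betw (\<lambda>j. K i j) {1..m} {1..m}"
  using latin unfolding latin_square_def by blast

lemma col_bij: "j \<in> {1..m} \<Longrightarrow> bij_betw (\<lambda>i. K i j) {1..m} {1..m}"
  using latin unfolding latin_square_def by blast

lemma K_range: "i \<in> {1..m} \<Longrightarrow> j \<in> {1..m} \<Longrightarrow> K i j \<in> {1..m}"
  using bij_betw_apply[OF row_bij] by blast

lemma row_inj:
  assumes "i \<in> {1..m}" "j \<in> {1..m}" "j' \<in> {1..m}" "K i j = K i j'"
  shows "j = j'"
  using inj_onD[OF bij_betw_imp_inj_on[OF row_bij[OF assms(1)]]] assms(2-4) by blast

lemma col_inj:
  assumes "j \<in> {1..m}" "i \<in> {1..m}" "i' \<in> {1..m}" "K i j = K i' j"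
  shows "i = i'"
  using inj_onD[OF bij_betw_imp_inj_on[OF col_bij[OF assms(1)]]] assms(2-4) by blast

lemma row_surj:
  assumes "i \<in> {1..m}" "k \<in> {1..m}"
  obtains j where "j \<in> {1..m}" "K i j = k"
  using bij_betw_imp_surj_on[OF row_bij[OF assms(1)]] assms(2) by (metis imageE)

lemma subsquare_ranges: "Rs \<subseteq> {1..m}" "Cs \<subseteq> {1..m}" "Ss \<subseteq> {1..m}"
  using subsq unfolding subsquare_def by auto

lemma subsquare_symbol: "i \<in> Rs \<Longrightarrow> j \<in> Cs \<Longrightarrow> K i j \<in> Ss"
  using subsq unfolding subsquare_def bij_betw_def by blast

lemma subsquare_col:
  assumes "i \<in> Rs" "j \<in> {1..m}" "K i j \<in> Ss"
  shows "j \<in> Cs"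
proof -
  have "bij_betw (\<lambda>j. K i j) Cs Ss" using subsq assms(1) unfolding subsquare_def by blast
  then obtain j' where "j' \<in> Cs" "K i j' = K i j"
    using assms(3) by (metis bij_betw_imp_surj_on imageE)
  then show ?thesis
    using row_inj[of i j' j] assms subsquare_ranges by blast
qed

lemma subsquare_row:
  assumes "j \<in> Cs" "i \<in> {1..m}" "K i j \<in> Ss"
  shows "i \<in> Rs"
proof -
  have "bij_betw (\<lambda>i. K i j) Rs Ss" using subsq assms(1) unfolding subsquare_def by blast
  then obtain i' where "i' \<in> Rs" "K i' j = K i j"
    using assms(3) by (metis bij_betw_imp_surj_on imageE)
  then show ?thesis
    using col_inj[of j i' i] assms subsquare_ranges by blast
qed

lemma outside_subsquare: "\<exists>r\<in>{1..m}. r \<notin> Rs" "\<exists>c\<in>{1..m}. c \<notin> Cs" "\<exists>s\<in>{1..m}. s \<notin> Ss"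
proof -
  have "card Cs = card Rs" "card Ss = card Rs" using subsq unfolding subsquare_def by auto
  moreover have "\<not> {1..m} \<subseteq> A" if "A \<subseteq> {1..m}" "card A < m" for A
    using that subset_antisym[OF that(1)] by fastforce
  ultimately show "\<exists>r\<in>{1..m}. r \<notin> Rs" "\<exists>c\<in>{1..m}. c \<notin> Cs" "\<exists>s\<in>{1..m}. s \<notin> Ss"
    using subsquare_ranges proper by (metis subsetI)+
qed

lemma X_subset: "XJ m Rs Cs Ss \<subseteq> {1..3*m}"
  using subsquare_ranges unfolding XJ_def by auto

lemma row_in_X: "i \<in> {1..m} \<Longrightarrow> i \<in> XJ m Rs Cs Ss \<longleftrightarrow> i \<in> Rs"
  using subsquare_ranges unfolding XJ_def by auto

lemma col_in_X: "j \<in> {1..m} \<Longrightarrow> m + j \<in> XJ m Rs Cs Ss \<longleftrightarrow> j \<in> Cs"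
  using subsquare_ranges unfolding XJ_def by auto

lemma symbol_in_X: "k \<in> {1..m} \<Longrightarrow> 2*m + k \<in> XJ m Rs Cs Ss \<longleftrightarrow> k \<in> Ss"
  using subsquare_ranges unfolding XJ_def by auto

lemma cell_subset: "i \<in> {1..m} \<Longrightarrow> j \<in> {1..m} \<Longrightarrow> cell m K i j \<subseteq> {1..3*m}"
  using K_range[of i j] unfolding cell_def by auto

lemma cell_ordered:
  "i \<in> {1..m} \<Longrightarrow> j \<in> {1..m} \<Longrightarrow> i < m + j \<and> m + j < 2*m + K i j"
  using K_range[of i j] by auto

lemma card_cell: "i \<in> {1..m} \<Longrightarrow> j \<in> {1..m} \<Longrightarrow> card (cell m K i j) = 3"
  using cell_ordered[of i j] unfolding cell_def by auto

lemma cell_cases: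
  assumes "i \<in> {1..m}" "j \<in> {1..m}" "p \<in> cell m K i j"
  shows "(p = i \<and> p \<le> m) \<or> (p = m + j \<and> m < p \<and> p \<le> 2*m) \<or> (p = 2*m + K i j \<and> 2*m < p)"
  using assms K_range[OF assms(1,2)] unfolding cell_def by auto

lemma cell_subset_X_iff:
  assumes "i \<in> {1..m}" "j \<in> {1..m}"
  shows "cell m K i j \<subseteq> XJ m Rs Cs Ss \<longleftrightarrow> i \<in> Rs \<and> j \<in> Cs"
  using row_in_X[OF assms(1)] col_in_X[OF assms(2)] symbol_in_X[OF K_range[OF assms]]
    subsquare_symbol[of i j]
  unfolding cell_def by auto

text \<open>Two of the three points of a cell determine the third through the Latin property,
  and inside X(J) through the subsquare property.\<close>

lemma cell_subset_X_if_two_points: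
  assumes ij: "i \<in> {1..m}" "j \<in> {1..m}" and pq: "{p, q} \<subseteq> cell m K i j" "p \<noteq> q"
    and X: "{p, q} \<subseteq> XJ m Rs Cs Ss"
  shows "cell m K i j \<subseteq> XJ m Rs Cs Ss"
proof -
  have k: "K i j \<in> {1..m}" using K_range ij by blast
  have "(i \<in> Rs \<and> j \<in> Cs) \<or> (i \<in> Rs \<and> K i j \<in> Ss) \<or> (j \<in> Cs \<and> K i j \<in> Ss)"
    using cell_cases[OF ij, of p] cell_cases[OF ij, of q] pq X
      row_in_X[OF ij(1)] col_in_X[OF ij(2)] symbol_in_X[OF k] by auto
  then have "i \<in> Rs \<and> j \<in> Cs" using subsquare_col subsquare_row ij by blast
  then show ?thesis using cell_subset_X_iff ij by blast
qed

lemma cells_meet: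
  assumes ij: "i \<in> {1..m}" "j \<in> {1..m}" and ij': "i' \<in> {1..m}" "j' \<in> {1..m}"
    and pq: "{p, q} \<subseteq> cell m K i j" "{p, q} \<subseteq> cell m K i' j'" "p \<noteq> q"
  shows "cell m K i j = cell m K i' j'"
proof -
  have shared: "x = i \<and> x = i' \<or> x = m + j \<and> x = m + j' \<or> x = 2*m + K i j \<and> x = 2*m + K i' j'"
    if "x \<in> cell m K i j" "x \<in> cell m K i' j'" for x
    using cell_cases[OF ij that(1)] cell_cases[OF ij' that(2)] by auto
  have "i = i' \<and> j = j' \<or> i = i' \<and> K i j = K i' j' \<or> j = j' \<and> K i j = K i' j'"
    using shared[of p] shared[of q] pq by auto
  then have "i = i' \<and> j = j'"
    using row_inj[OF ij(1,2) ij'(2)] col_inj[OF ij(2,1) ij'(1)] by auto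
  then show ?thesis by simp
qed

definition lines :: "nat set set" where
  "lines = insert (XJ m Rs Cs Ss)
     {cell m K i j | i j. i \<in> {1..m} \<and> j \<in> {1..m} \<and> \<not> cell m K i j \<subseteq> XJ m Rs Cs Ss}"

lemma lines_cases:
  assumes "L \<in> lines"
  obtains "L = XJ m Rs Cs Ss"
    | i j where "i \<in> {1..m}" "j \<in> {1..m}" "L = cell m K i j" "\<not> cell m K i j \<subseteq> XJ m Rs Cs Ss"
  using assms unfolding lines_def by blast

lemma X_line: "XJ m Rs Cs Ss \<in> lines"
  by (simp add: lines_def)

sublocale partial_linear_space "{1..3*m}" lines
proof
  fix L L' p q
  assume L: "L \<in> lines" and L': "L' \<in> lines" and pq: "p \<noteq> q" "{p, q} \<subseteq> L" "{p, q} \<subseteq> L'"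
  have X_if_X: "L'' = XJ m Rs Cs Ss"
    if "L'' \<in> lines" "{p, q} \<subseteq> L''" "{p, q} \<subseteq> XJ m Rs Cs Ss" for L''
    using that(1)
  proof (cases rule: lines_cases)
    case (2 i j)
    then show ?thesis using cell_subset_X_if_two_points[OF 2(1,2) _ pq(1) that(3)] that(2) by blast
  qed
  show "L = L'"
  proof (cases "{p, q} \<subseteq> XJ m Rs Cs Ss")
    case True
    then show ?thesis using X_if_X[OF L pq(2)] X_if_X[OF L' pq(3)] by simp
  next
    case False
    from L obtain i j where ij: "i \<in> {1..m}" "j \<in> {1..m}" "L = cell m K i j"
      by (cases rule: lines_cases) (use False pq(2) in auto)
    from L' obtain i' j' where ij': "i' \<in> {1..m}" "j' \<in> {1..m}" "L' = cell m K i' j'"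
      by (cases rule: lines_cases) (use False pq(3) in auto)
    show ?thesis
      using cells_meet[OF ij(1,2) ij'(1,2)] pq unfolding ij(3) ij'(3) by blast
  qed
qed simp

lemma cells_circuits:
  assumes "i \<in> {1..m}" "j \<in> {1..m}"
  shows "cell m K i j \<in> circuits {1..3*m} indep"
proof (cases "cell m K i j \<subseteq> XJ m Rs Cs Ss")
  case True
  with circuitI[OF cell_subset[OF assms] card_cell[OF assms] X_line] show ?thesis .
next
  case False
  then have "cell m K i j \<in> lines" using assms unfolding lines_def by blast
  with circuitI[OF cell_subset[OF assms] card_cell[OF assms]] show ?thesis by blast
qed

lemma mrank_indep: "mrank indep {1..3*m} = 3"
proof -
  obtain r where r: "r \<in> {1..m}" "r \<notin> Rs" using outside_subsquare by blast
  define r' :: nat where "r' = (if r = 1 then 2 else 1)"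
  have r': "r' \<in> {1..m}" "r' \<noteq> r" using m_ge_2 r unfolding r'_def by auto
  let ?T = "{r, r', m + 1}"
  have T: "?T \<subseteq> {1..3*m}" "card ?T = 3" using r r' m_ge_2 by auto
  have "\<not> ?T \<subseteq> L" if "L \<in> lines" for L
    using that
  proof (cases rule: lines_cases)
    case 1
    then show ?thesis using r row_in_X by blast
  next
    case (2 i j)
    then show ?thesis using cell_cases[OF 2(1,2), of r] cell_cases[OF 2(1,2), of r'] r r' by auto
  qed
  then show ?thesis using mrank_eq_3[OF T] by blast
qed

lemma degeneration: "degeneration_of_MK m K indep"
  unfolding degeneration_of_MK_def CK_eq_cells
  using matroid loopless mrank_indep cells_circuits card_cell by auto

lemma restriction_uniform2_X: "restriction_uniform2 indep (XJ m Rs Cs Ss)"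
  using restriction_uniform2_line[OF X_line X_subset] .

lemma sum_row: "i \<in> {1..m} \<Longrightarrow> (\<Sum>j\<in>{1..m}. f (K i j)) = (\<Sum>k\<in>{1..m}. f k)"
  by (rule sum.reindex_bij_betw[OF row_bij])

lemma sum_col: "j \<in> {1..m} \<Longrightarrow> (\<Sum>i\<in>{1..m}. f (K i j)) = (\<Sum>k\<in>{1..m}. f k)"
  by (rule sum.reindex_bij_betw[OF col_bij])

lemma bd_cell_pair:
  assumes ij: "i \<in> {1..m}" "j \<in> {1..m}" and "a < b"
  shows "bd (cell m K i j) {a, b} =
    (if a = i then 1 else 0) * (if b = m + j then 1 else 0)
    - (if a = i then 1 else 0) * (if b = 2*m + K i j then 1 else 0)
    + (if a = m + j then 1 else 0) * (if b = 2*m + K i j then 1 else (0::'a::field))"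
  using cell_ordered[OF ij] \<open>a < b\<close>
  by (simp add: cell_def bd_three doubleton_eq_ordered)

definition bd_cells :: "nat set \<Rightarrow> 'a::field" where
  "bd_cells = (\<Sum>i\<in>{1..m}. \<Sum>j\<in>{1..m}. bd (cell m K i j))"

text \<open>Each pair of points in different blocks lies in exactly one cell; the Latin property
  enters through reindexing the row and column sums.\<close>

lemma bd_cells_pair:
  assumes "a < b"
  shows "bd_cells {a, b} = block_pair_sign m a b"
proof -
  \<comment> \<open>a named indicator, so that the simplifier does not split the conditionals\<close>
  define e :: "nat \<Rightarrow> nat \<Rightarrow> 'a" where "e p q = (if p = q then 1 else 0)" for p q
  let ?ind = "\<lambda>c p. if c < p \<and> p \<le> c + m then 1 else (0::'a)"
  have rows: "(\<Sum>i\<in>{1..m}. e a i) = ?ind 0 a"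
    using sum_block_indicator[where b=a and c=0 and m=m] unfolding e_def by (simp only: add_0)
  have cols: "(\<Sum>j\<in>{1..m}. e p (m + j)) = ?ind m p" for p
    unfolding e_def by (rule sum_block_indicator)
  have symbols_in_row: "(\<Sum>j\<in>{1..m}. e b (2*m + K i j)) = ?ind (2*m) b" if "i \<in> {1..m}" for i
    using sum_row[OF that, of "\<lambda>k. e b (2*m + k)"] sum_block_indicator
    unfolding e_def by (rule trans)
  have symbols_in_col: "(\<Sum>i\<in>{1..m}. e b (2*m + K i j)) = ?ind (2*m) b" if "j \<in> {1..m}" for j
    using sum_col[OF that, of "\<lambda>k. e b (2*m + k)"] sum_block_indicator
    unfolding e_def by (rule trans)
  have row_col: "(\<Sum>i\<in>{1..m}. \<Sum>j\<in>{1..m}. e a i * e b (m + j)) = ?ind 0 a * ?ind m b"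
    by (simp only: sum_distrib_left[symmetric] sum_distrib_right[symmetric] rows cols)
  have row_symbol:
    "(\<Sum>i\<in>{1..m}. \<Sum>j\<in>{1..m}. e a i * e b (2*m + K i j)) = ?ind 0 a * ?ind (2*m) b"
    by (simp only: sum_distrib_left[symmetric] symbols_in_row sum_distrib_right[symmetric] rows
        cong: sum.cong)
  have col_symbol:
    "(\<Sum>i\<in>{1..m}. \<Sum>j\<in>{1..m}. e a (m + j) * e b (2*m + K i j)) = ?ind m a * ?ind (2*m) b"
    by (simp only: sum.swap[of _ "{1..m}"] sum_distrib_left[symmetric] symbols_in_col
        sum_distrib_right[symmetric] cols cong: sum.cong)
  have "bd_cells {a, b} = (\<Sum>i\<in>{1..m}. \<Sum>j\<in>{1..m}. e a i * e b (m + j)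
      - e a i * e b (2*m + K i j) + e a (m + j) * e b (2*m + K i j))"
    unfolding bd_cells_def sum_fun_apply e_def using \<open>a < b\<close>
    by (intro sum.cong refl) (simp add: bd_cell_pair)
  also have "\<dots> = ?ind 0 a * ?ind m b - ?ind 0 a * ?ind (2*m) b + ?ind m a * ?ind (2*m) b"
    by (simp only: sum.distrib sum_subtractf row_col row_symbol col_symbol)
  also have "\<dots> = block_pair_sign m a b"
    by (simp add: block_pair_sign_def)
  finally show ?thesis .
qed

lemma bd_cells_in_os_ideal: "bd_cells \<in> os_ideal (3*m) (circuits {1..3*m} indep)"
proof -
  have "bd (cell m K i j) \<in> os_ideal (3*m) (circuits {1..3*m} indep)"
    if "i \<in> {1..m}" "j \<in> {1..m}" for i j
    using cells_circuits[OF that] cell_subset[OF that] by (rule bd_in_os_ideal)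
  then show ?thesis
    unfolding bd_cells_def os_ideal_def by (intro module.span_sum[OF module_escale]) simp
qed

lemma wedge_oneform_eq_bd_cells:
  fixes l1 l2 l3 \<alpha> \<beta> \<gamma> :: "'a::field"
  assumes l: "l1 + l2 + l3 = 0" and \<alpha>: "\<alpha> + \<beta> + \<gamma> = 0"
  shows "wedge (oneform m l1 l2 l3) (oneform m \<alpha> \<beta> \<gamma>) = escale (l1 * \<beta> - l2 * \<alpha>) bd_cells"
proof
  fix U
  show "wedge (oneform m l1 l2 l3) (oneform m \<alpha> \<beta> \<gamma>) U = escale (l1 * \<beta> - l2 * \<alpha>) bd_cells U"
  proof (cases "finite U \<and> card U = 2")
    case True
    then obtain a b where U: "U = {a, b}" "a < b"
      by (metis card_2_iff insert_commute linorder_neqE_nat)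
    show ?thesis
      unfolding U(1) escale_apply wedge_oneform_pair[OF U(2) l \<alpha>] bd_cells_pair[OF U(2)] ..
  next
    case False
    have "wedge (oneform m l1 l2 l3) (oneform m \<alpha> \<beta> \<gamma>) \<in> Edeg (3*m) (1 + 1)"
      by (intro wedge_Edeg oneform_Edeg)
    then have "wedge (oneform m l1 l2 l3) (oneform m \<alpha> \<beta> \<gamma>) U = 0"
      using False Edeg_nonzero by fastforce
    moreover have "bd (cell m K i j) U = (0::'a)" if "i \<in> {1..m}" "j \<in> {1..m}" for i j
      using Edeg_nonzero[OF bd_Edeg[OF cell_subset[OF that]]] card_cell[OF that] False by fastforce
    then have "bd_cells U = (0::'a)"
      unfolding bd_cells_def sum_fun_apply by (intro sum.neutral ballI) auto
    ultimately show ?thesis by simp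
  qed
qed

lemma off_lines_within_block:
  assumes "p \<noteq> q" "p \<notin> XJ m Rs Cs Ss"
    and "(p \<le> m \<and> q \<le> m) \<or> (m < p \<and> p \<le> 2*m \<and> m < q \<and> q \<le> 2*m) \<or> (2*m < p \<and> 2*m < q)"
  shows "\<forall>L\<in>lines. \<not> {p, q} \<subseteq> L"
proof (intro ballI notI)
  fix L assume "L \<in> lines" "{p, q} \<subseteq> L"
  from this(1) show False
  proof (cases rule: lines_cases)
    case 1
    then show False using \<open>{p, q} \<subseteq> L\<close> assms(2) by blast
  next
    case (2 i j)
    then show False
      using cell_cases[OF 2(1,2), of p] cell_cases[OF 2(1,2), of q] \<open>{p, q} \<subseteq> L\<close> assms(1,3) by auto
  qed
qed

lemma cocycle_constant_on_blocks:
  fixes l1 l2 l3 :: "'a::field"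
  assumes x: "x \<in> Edeg (3*m) 1"
    and cocycle: "wedge (oneform m l1 l2 l3) x \<in> os_ideal (3*m) (circuits {1..3*m} indep)"
  shows "l1 \<noteq> 0 \<Longrightarrow> \<exists>a. \<forall>t\<in>{1..m}. x {t} = a"
    and "l2 \<noteq> 0 \<Longrightarrow> \<exists>b. \<forall>t\<in>{1..m}. x {m + t} = b"
    and "l3 \<noteq> 0 \<Longrightarrow> \<exists>c. \<forall>t\<in>{1..m}. x {2*m + t} = c"
proof -
  have equal: "x {q} = x {p}"
    if "p \<notin> XJ m Rs Cs Ss"
      "(p \<le> m \<and> q \<le> m) \<or> (m < p \<and> p \<le> 2*m \<and> m < q \<and> q \<le> 2*m) \<or> (2*m < p \<and> 2*m < q)"
      "oneform m l1 l2 l3 {p} = oneform m l1 l2 l3 {q}" "oneform m l1 l2 l3 {p} \<noteq> 0"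
    for p q
  proof (cases "p = q")
    case False
    show ?thesis
      using os_ideal_wedge_off_lines[OF order_refl oneform_Edeg x cocycle
          off_lines_within_block[OF False that(1,2)] False] that(3,4) by simp
  qed simp
  obtain r where r: "r \<in> {1..m}" "r \<notin> Rs" using outside_subsquare(1) by blast
  obtain c where c: "c \<in> {1..m}" "c \<notin> Cs" using outside_subsquare(2) by blast
  obtain s where s: "s \<in> {1..m}" "s \<notin> Ss" using outside_subsquare(3) by blast
  show "\<exists>a. \<forall>t\<in>{1..m}. x {t} = a" if "l1 \<noteq> 0"
  proof (intro exI ballI)
    fix t assume t: "t \<in> {1..m}"
    show "x {t} = x {r}"
      by (rule equal) (use r t row_in_X[OF r(1)] that in \<open>auto simp: oneform_blocks\<close>)
  qed
  show "\<exists>b. \<forall>t\<in>{1..m}. x {m + t} = b" if "l2 \<noteq> 0"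
  proof (intro exI ballI)
    fix t assume t: "t \<in> {1..m}"
    show "x {m + t} = x {m + c}"
      by (rule equal) (use c t col_in_X[OF c(1)] that in \<open>auto simp: oneform_blocks\<close>)
  qed
  show "\<exists>c. \<forall>t\<in>{1..m}. x {2*m + t} = c" if "l3 \<noteq> 0"
  proof (intro exI ballI)
    fix t assume t: "t \<in> {1..m}"
    show "x {2*m + t} = x {2*m + s}"
      by (rule equal) (use s t symbol_in_X[OF s(1)] that in \<open>auto simp: oneform_blocks\<close>)
  qed
qed

lemma cocycle_cell_relation:
  fixes l1 l2 l3 :: "'a::field"
  assumes x: "x \<in> Edeg (3*m) 1"
    and cocycle: "wedge (oneform m l1 l2 l3) x \<in> os_ideal (3*m) (circuits {1..3*m} indep)"
    and sum_zero: "l1 + l2 + l3 = 0" and nonzero: "oneform m l1 l2 l3 \<noteq> 0"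
    and ij: "i \<in> {1..m}" "j \<in> {1..m}" "\<not> (i \<in> Rs \<and> j \<in> Cs)"
  shows "x {i} + x {m + j} + x {2*m + K i j} = 0"
proof -
  have "cell m K i j \<in> lines"
    using ij cell_subset_X_iff[OF ij(1,2)] unfolding lines_def by blast
  then have line: "{i, m + j, 2*m + K i j} \<in> lines" by (simp add: cell_def)
  have k: "K i j \<in> {1..m}" using K_range[OF ij(1,2)] .
  show ?thesis
    using os_ideal_wedge_triangle[OF order_refl oneform_Edeg x cocycle line]
      cell_ordered[OF ij(1,2)] sum_zero not_all_zero_oneform[OF nonzero]
    by (simp add: oneform_blocks[OF ij(1)] oneform_blocks[OF ij(2)] oneform_blocks[OF k])
qed

lemma constant_blocks_from_cells:
  fixes \<rho> \<kappa> \<sigma> :: "nat \<Rightarrow> 'a::ab_group_add"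
  assumes cells: "\<And>i j. i \<in> {1..m} \<Longrightarrow> j \<in> {1..m} \<Longrightarrow> \<not> (i \<in> Rs \<and> j \<in> Cs) \<Longrightarrow>
      \<rho> i + \<kappa> j + \<sigma> (K i j) = 0"
    and two_constant: "(\<exists>a b. \<forall>t\<in>{1..m}. \<rho> t = a \<and> \<kappa> t = b)
      \<or> (\<exists>a c. \<forall>t\<in>{1..m}. \<rho> t = a \<and> \<sigma> t = c)
      \<or> (\<exists>b c. \<forall>t\<in>{1..m}. \<kappa> t = b \<and> \<sigma> t = c)"
  shows "\<exists>a b c. a + b + c = 0 \<and> (\<forall>t\<in>{1..m}. \<rho> t = a \<and> \<kappa> t = b \<and> \<sigma> t = c)"
proof -
  obtain r where r: "r \<in> {1..m}" "r \<notin> Rs" using outside_subsquare(1) by blast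
  obtain c where c: "c \<in> {1..m}" "c \<notin> Cs" using outside_subsquare(2) by blast
  have "\<exists>a b c. \<forall>t\<in>{1..m}. \<rho> t = a \<and> \<kappa> t = b \<and> \<sigma> t = c"
    using two_constant
  proof (elim disjE exE)
    fix a b assume ab: "\<forall>t\<in>{1..m}. \<rho> t = a \<and> \<kappa> t = b"
    have "\<sigma> t = - a - b" if t: "t \<in> {1..m}" for t
    proof -
      obtain j where "j \<in> {1..m}" "K r j = t" using row_surj[OF r(1) t] .
      then show ?thesis using cells[of r j] r ab by (force simp: eq_neg_iff_add_eq_0 algebra_simps)
    qed
    with ab show ?thesis by blast
  next
    fix a s assume as: "\<forall>t\<in>{1..m}. \<rho> t = a \<and> \<sigma> t = s"
    have "\<kappa> t = - a - s" if "t \<in> {1..m}" for t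
      using cells[of r t] r that as K_range[OF r(1) that]
      by (force simp: eq_neg_iff_add_eq_0 algebra_simps)
    with as show ?thesis by blast
  next
    fix b s assume bs: "\<forall>t\<in>{1..m}. \<kappa> t = b \<and> \<sigma> t = s"
    have "\<rho> t = - b - s" if "t \<in> {1..m}" for t
      using cells[of t c] c that bs K_range[OF that c(1)]
      by (force simp: eq_neg_iff_add_eq_0 algebra_simps)
    with bs show ?thesis by blast
  qed
  then obtain a b s where blocks: "\<forall>t\<in>{1..m}. \<rho> t = a \<and> \<kappa> t = b \<and> \<sigma> t = s"
    by blast
  moreover have "a + b + s = 0"
    using cells[OF r(1) c(1)] r(2) blocks r(1) c(1) K_range[OF r(1) c(1)] by force
  ultimately show ?thesis by blast
qed

lemma cocycle_eq_oneform:
  fixes l1 l2 l3 :: "'a::field"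
  assumes x: "x \<in> Edeg (3*m) 1"
    and cocycle: "wedge (oneform m l1 l2 l3) x \<in> os_ideal (3*m) (circuits {1..3*m} indep)"
    and sum_zero: "l1 + l2 + l3 = 0" and nonzero: "oneform m l1 l2 l3 \<noteq> 0"
  shows "\<exists>a b c. a + b + c = 0 \<and> x = oneform m a b c"
proof -
  have "\<exists>a b c. a + b + c = 0 \<and> (\<forall>t\<in>{1..m}. x {t} = a \<and> x {m + t} = b \<and> x {2*m + t} = c)"
  proof (rule constant_blocks_from_cells)
    show "x {i} + x {m + j} + x {2*m + K i j} = 0"
      if "i \<in> {1..m}" "j \<in> {1..m}" "\<not> (i \<in> Rs \<and> j \<in> Cs)" for i j
      using cocycle_cell_relation[OF x cocycle sum_zero nonzero that] .
    show "(\<exists>a b. \<forall>t\<in>{1..m}. x {t} = a \<and> x {m + t} = b)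
      \<or> (\<exists>a c. \<forall>t\<in>{1..m}. x {t} = a \<and> x {2*m + t} = c)
      \<or> (\<exists>b c. \<forall>t\<in>{1..m}. x {m + t} = b \<and> x {2*m + t} = c)"
      using two_nonzero_of_sum_zero[OF sum_zero not_all_zero_oneform[OF nonzero]]
        cocycle_constant_on_blocks[OF x cocycle] by meson
  qed
  then show ?thesis using Edeg1_eq_oneform[OF x] by blast
qed

lemma oneform_cocycle:
  fixes l1 l2 l3 :: "'a::field"
  assumes "l1 + l2 + l3 = 0" "a + b + c = 0"
  shows "wedge (oneform m l1 l2 l3) (oneform m a b c) \<in> os_ideal (3*m) (circuits {1..3*m} indep)"
  unfolding wedge_oneform_eq_bd_cells[OF assms] os_ideal_def
  by (rule module.span_scale[OF module_escale bd_cells_in_os_ideal[unfolded os_ideal_def]])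

lemma cocycles_eq:
  fixes l1 l2 l3 :: "'a::field"
  assumes "l1 + l2 + l3 = 0" and "oneform m l1 l2 l3 \<noteq> 0"
  shows "{x \<in> Edeg (3*m) 1. wedge (oneform m l1 l2 l3) x \<in> os_ideal (3*m) (circuits {1..3*m} indep)}
    = {oneform m a b c | a b c. a + b + c = 0}"
  using cocycle_eq_oneform[OF _ _ assms] oneform_cocycle[OF assms(1)] oneform_Edeg by blast

lemma os_cohom_dim_1_eq_1:
  fixes l1 l2 l3 :: "'a::field"
  assumes "l1 + l2 + l3 = 0" and "oneform m l1 l2 l3 \<noteq> 0"
  shows "os_cohom_dim (3*m) (circuits {1..3*m} indep) (oneform m l1 l2 l3) 1 = 1"
proof -
  have degree_0:
    "(if (1::nat) = 0 then {0} else Edeg (3*m) (1 - 1)) = (Edeg (3*m) 0 :: (nat set \<Rightarrow> 'a) set)"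
    by simp
  have "os_cohom_dim (3*m) (circuits {1..3*m} indep) (oneform m l1 l2 l3) 1 =
    vector_space.dim escale {oneform m a b c | a b c. a + b + c = (0::'a)}
    - vector_space.dim escale (range (\<lambda>k. escale k (oneform m l1 l2 l3)))"
    unfolding os_cohom_dim_def Let_def degree_0 cocycles_eq[OF assms]
      coboundaries_degree_1[OF circuits_range[OF order_refl] oneform_Edeg] ..
  also have "\<dots> = 2 - 1"
  proof -
    have "m \<ge> 1" using m_ge_2 by simp
    then show ?thesis by (simp only: dim_oneforms_sum_zero dim_line[OF assms(2)])
  qed
  finally show ?thesis by simp
qed

end

theorem proposition3p3:
  fixes m :: nat and K :: "nat \<Rightarrow> nat \<Rightarrow> nat" and Rs Cs Ss :: "nat set"
  assumes "m \<ge> 2"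
    and "latin_square m K"
    and "subsquare m K Rs Cs Ss"
    and "card Rs < m"
  shows "\<exists>indep. degeneration_of_MK m K indep \<and> simple_matroid {1..3*m} indep \<and>
           restriction_uniform2 indep (XJ m Rs Cs Ss) \<and>
           (\<forall>l1 l2 l3 :: 'a::field. l1 + l2 + l3 = 0 \<and> oneform m l1 l2 l3 \<noteq> 0 \<longrightarrow>
              os_cohom_dim (3*m) (circuits {1..3*m} indep) (oneform m l1 l2 l3) 1 = 1)"
proof -
  interpret latin_subsquare m K Rs Cs Ss
    using assms by unfold_locales
  show ?thesis
    using degeneration simple restriction_uniform2_X os_cohom_dim_1_eq_1 by blast
qed

end
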